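(* Let $1\le k\le n$ and $1\le m<n$ be integers. Let $\mathcal{C}=\{d_1,\dots,d_n\}$ be a corpus of $n$ items of which exactly $m$ are useful (set $\mathcal{C}^+$) and $n-m$ non-useful (set $\mathcal{C}^-$). Define $\mathrm{MU}(i)=\mathbb{1}[i\le k]$. Let $\pi$ be any probability distribution over the set $S_n$ of rankings (permutations) of $\mathcal{C}$, with expected exposure vector $\epsilon_d=\sum_{\sigma\in S_n}\pi(\sigma)\,\mathrm{MU}(\bar\sigma_d)$, where $\bar\sigma_d$ is the rank of $d$ in $\sigma$. Define the target exposure vector $\epsilon^*$ by: for $d\in\mathcal{C}^+$, $\epsilon^*_d=1$ if $m\le k$ and $k/m$ if $m>k$; for $d\in\mathcal{C}^-$, $\epsilon^*_d=\frac{k-m}{n-m}$ if $m\le k$ and $0$ if $m>k$. Then: if $m\le k$, $\langle\epsilon,\epsilon^*\rangle\in\big[0,\ m+\frac{(k-m)^2}{n-m}\big]$; if $m>k$, $\langle\epsilon,\epsilon^*\rangle\in\big[0,\ \frac{k^2}{m}\big]$.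
   Context: $\langle\epsilon,\epsilon^*\rangle$ is the expected exposure relevance (EE-R) of the stochastic ranking policy $\pi$ under a top-$k$ truncation machine-user browsing model; $\epsilon^*$ is the exposure of an oracle retriever ranking all useful items above all non-useful ones uniformly at random within each group. *)

theory Defs
  imports "HOL-Analysis.Analysis" "HOL-Combinatorics.Permutations"
begin

text \<open>Corpus items are 0,...,n-1. A ranking is a permutation sigma of the items, with
sigma d the 0-based position of item d, so the (1-based) rank is sigma d + 1.\<close>

definition rankings :: "nat \<Rightarrow> (nat \<Rightarrow> nat) set" where
  "rankings n = {\<sigma>. \<sigma> permutes {..<n}}"

definition MU :: "nat \<Rightarrow> nat \<Rightarrow> real" where
  "MU k i = (if i \<le> k then 1 else 0)"

definition is_distribution :: "nat \<Rightarrow> ((nat \<Rightarrow> nat) \<Rightarrow> real) \<Rightarrow> bool" where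
  "is_distribution n \<pi> \<longleftrightarrow> (\<forall>\<sigma>\<in>rankings n. \<pi> \<sigma> \<ge> 0) \<and> (\<Sum>\<sigma>\<in>rankings n. \<pi> \<sigma>) = 1"

definition exposure :: "nat \<Rightarrow> nat \<Rightarrow> ((nat \<Rightarrow> nat) \<Rightarrow> real) \<Rightarrow> nat \<Rightarrow> real" where
  "exposure n k \<pi> d = (\<Sum>\<sigma>\<in>rankings n. \<pi> \<sigma> * MU k (\<sigma> d + 1))"

definition target_exposure :: "nat \<Rightarrow> nat \<Rightarrow> nat set \<Rightarrow> nat \<Rightarrow> real" where
  "target_exposure n k U d =
     (let m = card U in
      if d \<in> U then (if m \<le> k then 1 else real k / real m)
      else (if m \<le> k then (real k - real m) / (real n - real m) else 0))"

definition EER :: "nat \<Rightarrow> nat \<Rightarrow> nat set \<Rightarrow> ((nat \<Rightarrow> nat) \<Rightarrow> real) \<Rightarrow> real" where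
  "EER n k U \<pi> = (\<Sum>d<n. exposure n k \<pi> d * target_exposure n k U d)"

end

theory Submission
  imports Defs
begin

text \<open>For a fixed ranking the exposure vector is the indicator of the top-\<open>k\<close> set, so
  \<open>\<langle>\<epsilon>, \<epsilon>\<^sup>*\<rangle>\<close> is the total target exposure of \<open>k\<close> items. Writing the target as
  \<open>c + (1 - c) [d \<in> U]\<close> (resp. \<open>(k/m) [d \<in> U]\<close>), this total grows with the number of
  useful items among the \<open>k\<close>, which is at most \<open>min k m\<close>; the resulting bound is
  \<open>\<langle>\<epsilon>\<^sup>*, \<epsilon>\<^sup>*\<rangle>\<close>. A stochastic policy averages these per-ranking values.\<close>

text \<open>The value \<open>\<langle>\<epsilon>\<^sup>*, \<epsilon>\<^sup>*\<rangle>\<close>: \<open>m + (n - m) ((k - m)/(n - m))\<^sup>2\<close> if \<open>m \<le> k\<close>,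
  and \<open>m (k/m)\<^sup>2\<close> otherwise.\<close>

definition ideal_EER :: "nat \<Rightarrow> nat \<Rightarrow> nat \<Rightarrow> real" where
  "ideal_EER n k m =
     (if m \<le> k then real m + (real k - real m)^2 / (real n - real m) else (real k)^2 / real m)"

lemma card_permutes_positions_lessThan:
  assumes "\<sigma> permutes {..<n}" "k \<le> n"
  shows "card {d\<in>{..<n}. \<sigma> d < k} = k"
proof -
  have "{d\<in>{..<n}. \<sigma> d < k} = \<sigma> -` {..<k}"
  proof (intro set_eqI iffI)
    fix d assume "d \<in> \<sigma> -` {..<k}"
    then show "d \<in> {d\<in>{..<n}. \<sigma> d < k}"
      using assms permutes_in_image[OF assms(1), of d] by auto
  qed simp
  moreover have "card (\<sigma> -` {..<k}) = card {..<k}"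
    using permutes_bij[OF assms(1)] by (intro card_vimage_inj) (auto simp: bij_def)
  ultimately show ?thesis by simp
qed

lemma sum_MU_positions:
  fixes \<sigma> :: "nat \<Rightarrow> nat" and f :: "nat \<Rightarrow> real"
  shows "(\<Sum>d<n. MU k (\<sigma> d + 1) * f d) = sum f {d\<in>{..<n}. \<sigma> d < k}"
proof -
  have "sum f {d\<in>{..<n}. \<sigma> d < k} = (\<Sum>d<n. if \<sigma> d < k then f d else 0)"
    by (rule sum.inter_filter) simp
  then show ?thesis
    by (auto simp: MU_def intro!: sum.cong)
qed

lemma EER_eq_sum_rankings:
  "EER n k U \<pi> =
     (\<Sum>\<sigma>\<in>rankings n. \<pi> \<sigma> * sum (target_exposure n k U) {d\<in>{..<n}. \<sigma> d < k})"
proof -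
  have "EER n k U \<pi> = (\<Sum>d<n. \<Sum>\<sigma>\<in>rankings n. \<pi> \<sigma> * (MU k (\<sigma> d + 1) * target_exposure n k U d))"
    unfolding EER_def exposure_def by (simp add: sum_distrib_right mult.assoc)
  also have "\<dots> = (\<Sum>\<sigma>\<in>rankings n. \<pi> \<sigma> * (\<Sum>d<n. MU k (\<sigma> d + 1) * target_exposure n k U d))"
    by (simp add: sum.swap[of _ "{..<n}"] sum_distrib_left)
  finally show ?thesis unfolding sum_MU_positions .
qed

lemma target_exposure_nonneg:
  assumes "k \<le> n"
  shows "0 \<le> target_exposure n k U d"
  using assms by (auto simp: target_exposure_def Let_def)

lemma sum_target_exposure_le_ideal_EER:
  assumes "finite A" "card A = k" "finite U" "k \<le> n"
  shows "sum (target_exposure n k U) A \<le> ideal_EER n k (card U)"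
proof -
  let ?m = "card U"
  have useful_count: "(\<Sum>d\<in>A. if d \<in> U then 1 else 0 :: real) = card (A \<inter> U)"
    using assms(1) by (simp add: sum.If_cases)
  show ?thesis
  proof (cases "?m \<le> k")
    case True
    define c where "c = (real k - real ?m) / (real n - real ?m)"
    have "c \<le> 1"
      using True assms(4) by (cases "?m = n") (auto simp: c_def divide_le_eq_1)
    have "sum (target_exposure n k U) A = (\<Sum>d\<in>A. c + (1 - c) * (if d \<in> U then 1 else 0))"
      using True by (intro sum.cong) (auto simp: target_exposure_def Let_def c_def)
    also have "\<dots> = c * k + (1 - c) * card (A \<inter> U)"
      using assms(2) by (simp add: sum.distrib sum_distrib_left[symmetric] useful_count)
    also have "\<dots> \<le> c * k + (1 - c) * ?m"
      using \<open>c \<le> 1\<close> card_mono[OF assms(3), of "A \<inter> U"] by (intro add_left_mono mult_left_mono) auto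
    also have "\<dots> = real ?m + c * (real k - real ?m)"
      by (simp add: algebra_simps)
    also have "\<dots> = ideal_EER n k ?m"
      using True by (simp add: ideal_EER_def c_def power2_eq_square)
    finally show ?thesis .
  next
    case False
    have "sum (target_exposure n k U) A = (\<Sum>d\<in>A. real k / real ?m * (if d \<in> U then 1 else 0))"
      using False by (intro sum.cong) (auto simp: target_exposure_def)
    also have "\<dots> = real k / real ?m * card (A \<inter> U)"
      unfolding sum_distrib_left[symmetric] useful_count ..
    also have "\<dots> \<le> real k / real ?m * k"
      using card_mono[OF assms(1), of "A \<inter> U"] assms(2) by (intro mult_left_mono) auto
    also have "\<dots> = ideal_EER n k ?m"
      using False by (simp add: ideal_EER_def power2_eq_square)
    finally show ?thesis .
  qed
qed

lemma convex_combination_le: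
  fixes w f :: "'a \<Rightarrow> real"
  assumes "\<And>x. x \<in> S \<Longrightarrow> 0 \<le> w x" "sum w S = 1" "\<And>x. x \<in> S \<Longrightarrow> f x \<le> B"
  shows "(\<Sum>x\<in>S. w x * f x) \<le> B"
proof -
  have "(\<Sum>x\<in>S. w x * f x) \<le> (\<Sum>x\<in>S. w x * B)"
    using assms(1,3) by (intro sum_mono mult_left_mono) auto
  also have "\<dots> = B"
    using assms(2) by (simp add: sum_distrib_right[symmetric])
  finally show ?thesis .
qed

lemma EER_nonneg:
  assumes "k \<le> n" "is_distribution n \<pi>"
  shows "0 \<le> EER n k U \<pi>"
  unfolding EER_eq_sum_rankings using assms
  by (intro sum_nonneg mult_nonneg_nonneg target_exposure_nonneg) (auto simp: is_distribution_def)

lemma EER_le_ideal_EER: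
  assumes "k \<le> n" "finite U" "is_distribution n \<pi>"
  shows "EER n k U \<pi> \<le> ideal_EER n k (card U)"
  unfolding EER_eq_sum_rankings
proof (rule convex_combination_le)
  show "\<And>\<sigma>. \<sigma> \<in> rankings n \<Longrightarrow> 0 \<le> \<pi> \<sigma>" "sum \<pi> (rankings n) = 1"
    using assms(3) by (auto simp: is_distribution_def)
next
  fix \<sigma> assume "\<sigma> \<in> rankings n"
  then have "card {d\<in>{..<n}. \<sigma> d < k} = k"
    using card_permutes_positions_lessThan[of \<sigma> n k] assms(1) by (simp add: rankings_def)
  then show "sum (target_exposure n k U) {d\<in>{..<n}. \<sigma> d < k} \<le> ideal_EER n k (card U)"
    using sum_target_exposure_le_ideal_EER[of "{d\<in>{..<n}. \<sigma> d < k}" k U n] assms(1,2) by simp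
qed

theorem corollary2:
  fixes n k m :: nat and U :: "nat set" and \<pi> :: "(nat \<Rightarrow> nat) \<Rightarrow> real"
  assumes "1 \<le> k" "k \<le> n" "1 \<le> m" "m < n"
    and "U \<subseteq> {..<n}" "card U = m"
    and "is_distribution n \<pi>"
  shows "(m \<le> k \<longrightarrow> 0 \<le> EER n k U \<pi> \<and>
            EER n k U \<pi> \<le> real m + (real k - real m)^2 / (real n - real m))
       \<and> (k < m \<longrightarrow> 0 \<le> EER n k U \<pi> \<and> EER n k U \<pi> \<le> (real k)^2 / real m)"
proof -
  have "finite U"
    using assms(5) finite_subset by blast
  then have "0 \<le> EER n k U \<pi> \<and> EER n k U \<pi> \<le> ideal_EER n k m"
    using EER_nonneg EER_le_ideal_EER assms(2,6,7) by blast
  then show ?thesis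
    unfolding ideal_EER_def by (cases "m \<le> k") simp_all
qed

end
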